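(* Let $q$ be a prime power with $n\mid q-1$, let $\zeta_n\in\mathbb{F}_q$ be a primitive $n$-th root of unity and $g\ge1$. Then the number of $\operatorname{PGl}_n(\mathbb{F}_q)$-conjugacy classes (under simultaneous conjugation) of tuples $(A_1,B_1,\dots,A_g,B_g)\in\operatorname{Sl}_n(\mathbb{F}_q)^{2g}$ with $[A_1,B_1]\cdots[A_g,B_g]=\zeta_nI$ equals the number of such tuples divided by $|\operatorname{PGl}_n(\mathbb{F}_q)|$.
   Context: $[A,B]=ABA^{-1}B^{-1}$. The set of these conjugacy classes is what the paper calls the set of $\mathbb{F}_q$-points of the twisted character variety $\mathcal{M}^g(\operatorname{Sl}_n)(q)$. *)

theory Defs
  imports "HOL-Analysis.Analysis"
begin

type_synonym ('a, 'n) sqmat = "'a ^ 'n ^ 'n"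

definition GL :: "('a::field, 'n::finite) sqmat set" where
  "GL = {P. invertible P}"

definition SL :: "('a::field, 'n::finite) sqmat set" where
  "SL = {A. det A = 1}"

definition commutator :: "('a::field, 'n::finite) sqmat \<Rightarrow> ('a, 'n) sqmat \<Rightarrow> ('a, 'n) sqmat" where
  "commutator A B = A ** B ** matrix_inv A ** matrix_inv B"

definition comm_prod :: "(('a::field, 'n::finite) sqmat \<times> ('a, 'n) sqmat) list \<Rightarrow> ('a, 'n) sqmat" where
  "comm_prod xs = foldr (\<lambda>(A, B) M. commutator A B ** M) xs (mat 1)"

definition twisted_tuples :: "nat \<Rightarrow> 'a::field \<Rightarrow> ((('a, 'n::finite) sqmat \<times> ('a, 'n) sqmat) list) set" where
  "twisted_tuples g \<zeta> = {xs. length xs = g \<and> (\<forall>(A, B) \<in> set xs. A \<in> SL \<and> B \<in> SL)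
       \<and> comm_prod xs = mat \<zeta>}"

definition conj_tuple :: "('a::field, 'n::finite) sqmat \<Rightarrow> (('a, 'n) sqmat \<times> ('a, 'n) sqmat) list
    \<Rightarrow> (('a, 'n) sqmat \<times> ('a, 'n) sqmat) list" where
  "conj_tuple P xs = map (\<lambda>(A, B). (P ** A ** matrix_inv P, P ** B ** matrix_inv P)) xs"

text \<open>Orbit relation of simultaneous conjugation on a set X of tuples. Since scalar
  matrices act trivially, the PGl_n-orbits coincide with the Gl_n-orbits.\<close>
definition conj_rel :: "(('a::field, 'n::finite) sqmat \<times> ('a, 'n) sqmat) list set
    \<Rightarrow> ((('a, 'n) sqmat \<times> ('a, 'n) sqmat) list \<times> (('a, 'n) sqmat \<times> ('a, 'n) sqmat) list) set" where
  "conj_rel X = {(s, t). s \<in> X \<and> t \<in> X \<and> (\<exists>P \<in> GL. t = conj_tuple P s)}"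

definition scalar_rel :: "(('a::field, 'n::finite) sqmat \<times> ('a, 'n) sqmat) set" where
  "scalar_rel = {(P, Q). P \<in> GL \<and> Q \<in> GL \<and> (\<exists>c. c \<noteq> 0 \<and> Q = mat c ** P)}"

definition PGL :: "('a::field, 'n::finite) sqmat set set" where
  "PGL = GL // scalar_rel"

definition primitive_root :: "nat \<Rightarrow> 'a::field \<Rightarrow> bool" where
  "primitive_root n z \<longleftrightarrow> z ^ n = 1 \<and> (\<forall>k. 0 < k \<and> k < n \<longrightarrow> z ^ k \<noteq> 1)"

end

theory Submission
  imports Defs "HOL-Algebra.Algebraic_Closure_Type"
begin

text \<open>Simultaneous conjugation by \<open>PGl\<^sub>n\<close> acts freely on the twisted tuples, so every orbit has
  \<open>|PGl\<^sub>n|\<close> elements. If \<open>P\<close> fixes a tuple, it commutes with all \<open>A\<^sub>i, B\<^sub>i\<close>. A subspace \<open>W\<close>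
  invariant under the tuple is trivial: in a basis adapted to \<open>W\<close> all \<open>A\<^sub>i, B\<^sub>i\<close> are block
  triangular, so the \<open>W\<close>-block of \<open>\<Prod> [A\<^sub>i, B\<^sub>i]\<close> has determinant 1, whereas that of \<open>\<zeta> I\<close> has
  determinant \<open>\<zeta>\<^bsup>dim W\<^esup>\<close>; as \<open>\<zeta>\<close> is a primitive \<open>n\<close>-th root, \<open>dim W\<close> is \<open>0\<close> or \<open>n\<close>. By Schur's
  argument every matrix commuting with the tuple is therefore \<open>0\<close> or invertible. Over the algebraic
  closure \<open>P\<close> has an eigenvalue \<open>a\<close>; then \<open>P - a I\<close> is singular, hence zero, and \<open>P\<close> is scalar.\<close>

(* The algebraic closure brings formal power series, whose coefficient syntax clashes with vector indexing. *)
no_notation fps_nth (infixl "$" 75)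

lemma matrix_inv_right:
  fixes A :: "'a::field^'n::finite^'n"
  shows "invertible A \<Longrightarrow> A ** matrix_inv A = mat 1"
  unfolding matrix_inv_def invertible_def by (rule someI_ex[THEN conjunct1])

lemma matrix_inv_left:
  fixes A :: "'a::field^'n::finite^'n"
  shows "invertible A \<Longrightarrow> matrix_inv A ** A = mat 1"
  unfolding matrix_inv_def invertible_def by (rule someI_ex[THEN conjunct2])

lemma matrix_inv_unique:
  fixes A B :: "'a::field^'n::finite^'n"
  assumes "A ** B = mat 1"
  shows "matrix_inv A = B"
proof -
  have "invertible A" using assms invertible_right_inverse by blast
  then have "matrix_inv A = matrix_inv A ** (A ** B)" by (simp add: assms)
  also have "\<dots> = B" by (simp add: matrix_mul_assoc matrix_inv_left \<open>invertible A\<close>)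
  finally show ?thesis .
qed

lemma invertible_matrix_inv:
  fixes A :: "'a::field^'n::finite^'n"
  shows "invertible A \<Longrightarrow> invertible (matrix_inv A)"
  using matrix_inv_left invertible_right_inverse by blast

lemma matrix_inv_matrix_inv:
  fixes A :: "'a::field^'n::finite^'n"
  shows "invertible A \<Longrightarrow> matrix_inv (matrix_inv A) = A"
  using matrix_inv_left matrix_inv_unique by blast

lemma matrix_inv_mult:
  fixes A B :: "'a::field^'n::finite^'n"
  assumes "invertible A" "invertible B"
  shows "matrix_inv (A ** B) = matrix_inv B ** matrix_inv A"
proof (rule matrix_inv_unique)
  have "A ** B ** (matrix_inv B ** matrix_inv A) = A ** (B ** matrix_inv B) ** matrix_inv A"
    by (simp only: matrix_mul_assoc)
  then show "A ** B ** (matrix_inv B ** matrix_inv A) = mat 1"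
    by (simp add: matrix_inv_right assms)
qed

lemma matrix_inv_cancel_left:
  fixes P :: "'a::field^'n::finite^'n"
  shows "invertible P \<Longrightarrow> matrix_inv P ** (P ** A) = A"
  by (simp add: matrix_mul_assoc matrix_inv_left)

lemma matrix_inv_cancel_right:
  fixes P :: "'a::field^'n::finite^'n"
  shows "invertible P \<Longrightarrow> P ** (matrix_inv P ** A) = A"
  by (simp add: matrix_mul_assoc matrix_inv_right)

lemma not_invertible_zero: "\<not> invertible (0 :: 'a::field^'n::finite^'n)"
proof
  assume "invertible (0 :: 'a^'n^'n)"
  then have "(0 :: 'a^'n^'n) = mat 1" unfolding invertible_def by auto
  then have "(0 :: 'a^'n^'n) $ i $ i = mat 1 $ i $ i" for i by simp
  then show False by (simp add: mat_def)
qed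

lemma mat_mult_commute:
  fixes A :: "'a::comm_semiring_1^'n::finite^'n"
  shows "mat c ** A = A ** mat c"
  by (simp add: vec_eq_iff matrix_matrix_mult_def mat_def mult.commute if_distrib if_distribR
      cong: if_cong)

lemma mat_mult_left:
  fixes A :: "'a::comm_semiring_1^'n::finite^'m"
  shows "mat c ** A = (\<chi> i j. c * A $ i $ j)"
  by (simp add: vec_eq_iff matrix_matrix_mult_def mat_def if_distrib if_distribR cong: if_cong)

lemma mat_mult_mat: "mat a ** mat b = (mat (a * b) :: 'a::comm_semiring_1^'n::finite^'n)"
  unfolding mat_mult_left by (simp add: vec_eq_iff mat_def)

lemma invertible_mat:
  "c \<noteq> 0 \<Longrightarrow> invertible (mat c :: 'a::field^'n::finite^'n)"
  using invertible_right_inverse[of "mat c"] mat_mult_mat[of c "inverse c"] by auto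

lemma matrix_inv_mat:
  "c \<noteq> 0 \<Longrightarrow> matrix_inv (mat c :: 'a::field^'n::finite^'n) = mat (inverse c)"
  by (rule matrix_inv_unique) (simp add: mat_mult_mat)

lemma mat_add: "mat (a + b) = (mat a + mat b :: 'a::comm_ring_1^'n::finite^'n)"
  by (simp add: vec_eq_iff mat_def)

lemma mat_diff: "mat (a - b) = (mat a - mat b :: 'a::comm_ring_1^'n::finite^'n)"
  by (simp add: vec_eq_iff mat_def)

lemma mat_mult_left_commute:
  fixes M :: "'a::comm_ring_1^'n::finite^'n"
  shows "mat c ** (M ** N) = M ** (mat c ** N)"
  by (simp only: matrix_mul_assoc mat_mult_commute[of c M])

lemma matrix_add_rdistrib:
  fixes A B :: "'a::semiring_1^'n::finite^'m"
  shows "(A + B) ** C = A ** C + B ** C"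
  by (vector matrix_matrix_mult_def sum.distrib[symmetric] field_simps)

lemma matrix_diff_rdistrib:
  fixes A B :: "'a::ring_1^'n::finite^'m"
  shows "(A - B) ** C = A ** C - B ** C"
  by (vector matrix_matrix_mult_def sum_subtractf[symmetric] field_simps)

lemma matrix_diff_ldistrib:
  fixes A :: "'a::ring_1^'n::finite^'m"
  shows "A ** (B - C) = A ** B - A ** C"
  by (vector matrix_matrix_mult_def sum_subtractf[symmetric] field_simps)

section \<open>Simultaneous conjugation\<close>

lemma matrix_inv_conj:
  fixes P A :: "'a::field^'n::finite^'n"
  assumes "invertible P" "invertible A"
  shows "matrix_inv (P ** A ** matrix_inv P) = P ** matrix_inv A ** matrix_inv P"
  using assms
  by (simp add: matrix_inv_mult invertible_mult invertible_matrix_inv matrix_inv_matrix_inv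
      matrix_mul_assoc)

lemma commutator_conj:
  fixes P A B :: "'a::field^'n::finite^'n"
  assumes "invertible P" "invertible A" "invertible B"
  shows "commutator (P ** A ** matrix_inv P) (P ** B ** matrix_inv P) = P ** commutator A B ** matrix_inv P"
  unfolding commutator_def matrix_inv_conj[OF assms(1,2)] matrix_inv_conj[OF assms(1,3)]
  by (simp only: matrix_mul_assoc[symmetric] matrix_inv_cancel_left[OF assms(1)])

lemma comm_prod_Cons [simp]: "comm_prod ((A, B) # xs) = commutator A B ** comm_prod xs"
  by (simp add: comm_prod_def)

lemma comm_prod_conj_tuple:
  fixes P :: "'a::field^'n::finite^'n"
  assumes "invertible P" and "\<forall>(A, B) \<in> set xs. invertible A \<and> invertible B"
  shows "comm_prod (conj_tuple P xs) = P ** comm_prod xs ** matrix_inv P"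
  using assms(2)
proof (induction xs)
  case Nil
  then show ?case by (simp add: comm_prod_def conj_tuple_def matrix_inv_right assms(1))
next
  case (Cons x xs)
  obtain A B where x: "x = (A, B)" by fastforce
  with Cons have IH: "comm_prod (conj_tuple P xs) = P ** comm_prod xs ** matrix_inv P"
    and "invertible A" "invertible B" by auto
  then have "comm_prod (conj_tuple P (x # xs))
      = P ** commutator A B ** matrix_inv P ** (P ** comm_prod xs ** matrix_inv P)"
    by (simp add: x conj_tuple_def commutator_conj assms(1))
  also have "\<dots> = P ** comm_prod (x # xs) ** matrix_inv P"
    by (simp add: x matrix_mul_assoc[symmetric] matrix_inv_cancel_left[OF assms(1)])
  finally show ?case .
qed

lemma conj_tuple_mult:
  fixes P Q :: "'a::field^'n::finite^'n"
  shows "invertible P \<Longrightarrow> invertible Q \<Longrightarrow> conj_tuple P (conj_tuple Q xs) = conj_tuple (P ** Q) xs"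
  by (simp add: conj_tuple_def matrix_inv_mult matrix_mul_assoc split_beta)

lemma conj_tuple_mat:
  assumes "(c::'a::field) \<noteq> 0"
  shows "conj_tuple (mat c :: 'a^'n::finite^'n) xs = xs"
proof -
  have "mat c ** A ** mat (inverse c) = A" for A :: "'a^'n^'n"
    by (simp add: mat_mult_commute[of c A] matrix_mul_assoc[symmetric] mat_mult_mat assms)
  then show ?thesis by (simp add: conj_tuple_def matrix_inv_mat assms map_idI split_beta)
qed

lemma conj_tuple_fixed_imp_commute:
  fixes P :: "'a::field^'n::finite^'n"
  assumes "invertible P" "conj_tuple P xs = xs" "(A, B) \<in> set xs"
  shows "P ** A = A ** P \<and> P ** B = B ** P"
proof -
  have "P ** C ** matrix_inv P = C \<Longrightarrow> P ** C = C ** P" for C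
    by (metis matrix_mul_assoc matrix_inv_left[OF assms(1)] matrix_mul_rid)
  moreover have "P ** A ** matrix_inv P = A" "P ** B ** matrix_inv P = B"
    using assms(2,3) map_eq_conv[of _ xs id] unfolding conj_tuple_def by fastforce+
  ultimately show ?thesis by blast
qed

lemma conj_mat:
  fixes P :: "'a::field^'n::finite^'n"
  shows "invertible P \<Longrightarrow> P ** mat c ** matrix_inv P = mat c"
  by (simp add: mat_mult_commute matrix_mul_assoc[symmetric] matrix_inv_cancel_right)

lemma det_conj:
  fixes P A :: "'a::field^'n::finite^'n"
  assumes "invertible P"
  shows "det (P ** A ** matrix_inv P) = det A"
proof -
  have "det P * det (matrix_inv P) = 1"
    by (simp only: det_mul[symmetric] matrix_inv_right[OF assms] det_I)
  then show ?thesis by (simp add: det_mul)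
qed

lemma twisted_tuples_invertible:
  "xs \<in> twisted_tuples g \<zeta> \<Longrightarrow> \<forall>(A, B) \<in> set xs. invertible (A :: 'a::field^'n::finite^'n) \<and> invertible B"
  unfolding twisted_tuples_def SL_def by (auto simp: invertible_det_nz)

lemma conj_tuple_twisted_tuples:
  fixes P :: "'a::field^'n::finite^'n"
  assumes "invertible P" and xs: "xs \<in> twisted_tuples g \<zeta>"
  shows "conj_tuple P xs \<in> twisted_tuples g \<zeta>"
proof -
  have "comm_prod (conj_tuple P xs) = mat \<zeta>"
    using xs comm_prod_conj_tuple[OF assms(1) twisted_tuples_invertible[OF xs]]
    by (simp add: twisted_tuples_def conj_mat assms(1))
  then show ?thesis
    using xs by (auto simp: twisted_tuples_def conj_tuple_def SL_def det_conj assms(1))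
qed

section \<open>Determinants of invariant blocks\<close>

definition block_triangular :: "'n::finite set \<Rightarrow> 'a::zero^'n^'n \<Rightarrow> bool" where
  "block_triangular I Z \<longleftrightarrow> (\<forall>i \<in> I. \<forall>j. j \<notin> I \<longrightarrow> Z $ j $ i = 0)"

text \<open>The \<open>I \<times> I\<close> block of \<open>Z\<close> padded by the identity; for block triangular \<open>Z\<close> its determinant is
  that of the block.\<close>
definition compress :: "'n::finite set \<Rightarrow> 'a::{zero,one}^'n^'n \<Rightarrow> 'a^'n^'n" where
  "compress I Z = (\<chi> j i. if i \<in> I then Z $ j $ i else if j = i then 1 else 0)"

lemma block_triangular_mult:
  fixes Z Y :: "'a::semiring_1^'n::finite^'n"
  assumes "block_triangular I Z" "block_triangular I Y"
  shows "block_triangular I (Z ** Y)"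
  unfolding block_triangular_def
proof (intro ballI allI impI)
  fix i j assume "i \<in> I" "j \<notin> I"
  then have "Z $ j $ l * Y $ l $ i = 0" for l
    using assms unfolding block_triangular_def by (cases "l \<in> I") auto
  then show "(Z ** Y) $ j $ i = 0" by (simp add: matrix_matrix_mult_def)
qed

lemma block_triangular_mat: "block_triangular I (mat c)"
  by (auto simp: block_triangular_def mat_def)

lemma compress_mult:
  fixes Z Y :: "'a::semiring_1^'n::finite^'n"
  assumes "block_triangular I Y"
  shows "compress I (Z ** Y) = compress I Z ** compress I Y"
proof -
  have "(compress I Z ** compress I Y) $ j $ i = compress I (Z ** Y) $ j $ i" for j i
  proof (cases "i \<in> I")
    case True
    then have "compress I Z $ j $ l * compress I Y $ l $ i = Z $ j $ l * Y $ l $ i" for l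
      using assms by (auto simp: compress_def block_triangular_def)
    then show ?thesis using True by (simp add: matrix_matrix_mult_def compress_def)
  next
    case False
    then have "compress I Z $ j $ l * compress I Y $ l $ i = (if l = i then compress I Z $ j $ l else 0)" for l
      by (simp add: compress_def)
    then show ?thesis using False by (simp add: matrix_matrix_mult_def compress_def)
  qed
  then show ?thesis by (simp add: vec_eq_iff)
qed

lemma det_compress_mat: "det (compress I (mat c :: 'a::comm_ring_1^'n::finite^'n)) = c ^ card I"
proof -
  have "det (compress I (mat c :: 'a^'n^'n)) = (\<Prod>i\<in>UNIV. if i \<in> I then c else 1)"
    by (subst det_diagonal) (auto simp: compress_def mat_def intro: prod.cong)
  also have "\<dots> = c ^ card I" by (simp add: prod.If_cases)
  finally show ?thesis .
qed

lemma det_compress_inverse: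
  fixes A :: "'a::field^'n::finite^'n"
  assumes "invertible A" "block_triangular I (matrix_inv A)"
  shows "det (compress I A) * det (compress I (matrix_inv A)) = 1"
  using det_compress_mat[of I 1] matrix_inv_right[OF assms(1)]
  by (simp add: det_mul[symmetric] compress_mult[OF assms(2), symmetric])

lemma det_compress_comm_prod:
  fixes xs :: "(('a::field^'n::finite^'n) \<times> ('a^'n^'n)) list"
  assumes "\<forall>(A, B) \<in> set xs. invertible A \<and> invertible B \<and>
      (\<forall>T \<in> {A, B, matrix_inv A, matrix_inv B}. block_triangular I T)"
  shows "block_triangular I (comm_prod xs) \<and> det (compress I (comm_prod xs)) = 1"
  using assms
proof (induction xs)
  case Nil
  then show ?case using det_compress_mat[of I 1] by (simp add: comm_prod_def block_triangular_mat)
next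
  case (Cons x xs)
  obtain A B where x: "x = (A, B)" by fastforce
  with Cons.prems have "invertible A" "invertible B"
    and tri: "block_triangular I A" "block_triangular I B"
      "block_triangular I (matrix_inv A)" "block_triangular I (matrix_inv B)" by auto
  have "block_triangular I (commutator A B)"
    using tri by (simp add: commutator_def block_triangular_mult)
  moreover have "det (compress I (commutator A B)) = 1"
  proof -
    have "det (compress I (commutator A B))
        = (det (compress I A) * det (compress I (matrix_inv A)))
          * (det (compress I B) * det (compress I (matrix_inv B)))"
      using tri by (simp add: commutator_def block_triangular_mult compress_mult det_mul mult_ac)
    then show ?thesis using tri by (simp add: det_compress_inverse \<open>invertible A\<close> \<open>invertible B\<close>)
  qed
  moreover have "block_triangular I (comm_prod xs)" "det (compress I (comm_prod xs)) = 1"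
    using Cons by auto
  ultimately show ?case
    by (simp add: x block_triangular_mult compress_mult det_mul)
qed

section \<open>Irreducibility\<close>

lemma matrix_vector_mult_axis: "((Z :: 'a::semiring_1^'n::finite^'m) *v axis i 1) $ j = Z $ j $ i"
  by (simp add: matrix_vector_mult_def axis_def if_distrib if_distribR cong: if_cong)

lemma basis_matrix_invertible:
  fixes B :: "('a::field^'n::finite) set"
  assumes "vec.independent B" "bij_betw f (UNIV :: 'n set) B"
  shows "invertible (\<chi> r i. f i $ r)"
proof -
  define S :: "'a^'n^'n" where "S = (\<chi> r i. f i $ r)"
  have "x = 0" if "S *v x = 0" for x
  proof -
    define c where "c v = x $ inv_into UNIV f v" for v
    have "(\<Sum>v\<in>B. c v *s v) = (\<Sum>i\<in>UNIV. x $ i *s f i)"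
      using sum.reindex_bij_betw[OF assms(2), of "\<lambda>v. c v *s v"] assms(2)
      by (simp add: c_def bij_betw_def)
    also have "\<dots> = S *v x"
      by (simp add: S_def matrix_vector_mult_def vec_eq_iff sum_component mult.commute)
    finally have "(\<Sum>v\<in>B. c v *s v) = 0"
      using that by simp
    with assms(1) have "\<forall>v\<in>B. c v = 0"
      unfolding vec.independent_explicit by blast
    then show "x = 0"
      using assms(2) by (auto simp: c_def vec_eq_iff bij_betw_def)
  qed
  then show ?thesis unfolding S_def
    using invertible_left_inverse matrix_left_invertible_ker by blast
qed

lemma subspace_coordinate_form:
  fixes W :: "('a::field^'n::finite) set"
  assumes "vec.subspace W"
  obtains S :: "'a^'n^'n" and I where "invertible S"
    and "\<And>x. S *v x \<in> W \<longleftrightarrow> (\<forall>j. j \<notin> I \<longrightarrow> x $ j = 0)"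
proof -
  obtain BW where BW: "BW \<subseteq> W" "vec.independent BW" "W \<subseteq> vec.span BW"
    by (rule vec.basis_exists)
  define B where "B = vec.extend_basis BW"
  have B: "BW \<subseteq> B" "vec.independent B" "vec.span B = UNIV"
    unfolding B_def
    using vec.extend_basis_superset[OF BW(2)] vec.independent_extend_basis[OF BW(2)]
      vec.span_extend_basis[OF BW(2)] by auto
  have "finite B" using B(2) by (rule vec.finiteI_independent)
  moreover have "card B = CARD('n)"
    using vec.basis_card_eq_dim[of B UNIV] B by (simp add: card_cart_basis)
  ultimately obtain f where f: "bij_betw f (UNIV :: 'n set) B"
    using finite_same_card_bij[of "UNIV :: 'n set" B] by auto
  define S :: "'a^'n^'n" where "S = (\<chi> r i. f i $ r)"
  define I where "I = {i. f i \<in> BW}"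
  have S: "invertible S" unfolding S_def using B(2) f by (rule basis_matrix_invertible)
  have S_mult: "S *v x = (\<Sum>i\<in>UNIV. x $ i *s f i)" for x
    by (simp add: S_def matrix_vector_mult_def vec_eq_iff sum_component mult.commute)
  have S_supported: "S *v x = (\<Sum>i\<in>I. x $ i *s f i)" if "\<forall>j. j \<notin> I \<longrightarrow> x $ j = 0" for x
    unfolding S_mult using that by (intro sum.mono_neutral_right) auto
  have f_I: "bij_betw f I BW"
    using f B(1) unfolding I_def bij_betw_def inj_on_def by auto
  have "S *v x \<in> W \<longleftrightarrow> (\<forall>j. j \<notin> I \<longrightarrow> x $ j = 0)" for x
  proof
    assume "S *v x \<in> W"
    then obtain u where u: "S *v x = (\<Sum>v\<in>BW. u v *s v)"
      using BW(3) vec.span_finite[OF vec.finiteI_independent[OF BW(2)]] by auto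
    define y where "y = (\<chi> i. if i \<in> I then u (f i) else 0)"
    have "S *v y = (\<Sum>i\<in>I. u (f i) *s f i)"
      by (subst S_supported) (auto simp: y_def)
    also have "\<dots> = S *v x"
      unfolding u by (rule sum.reindex_bij_betw[OF f_I])
    finally have "x = y" using inj_matrix_vector_mult[OF S] by (auto dest: injD)
    then show "\<forall>j. j \<notin> I \<longrightarrow> x $ j = 0" by (simp add: y_def)
  next
    assume "\<forall>j. j \<notin> I \<longrightarrow> x $ j = 0"
    then have "S *v x \<in> vec.span BW"
      unfolding S_supported[OF \<open>\<forall>j. j \<notin> I \<longrightarrow> x $ j = 0\<close>]
      by (intro vec.span_sum vec.span_scale vec.span_base) (auto simp: I_def)
    then show "S *v x \<in> W" using vec.span_minimal[OF BW(1) assms] by blast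
  qed
  with S that show thesis by blast
qed

lemma block_triangular_conj:
  fixes S T :: "'a::field^'n::finite^'n"
  assumes S: "invertible S" "\<And>x. S *v x \<in> W \<longleftrightarrow> (\<forall>j. j \<notin> I \<longrightarrow> x $ j = 0)"
    and T: "\<forall>v \<in> W. T *v v \<in> W"
  shows "block_triangular I (matrix_inv S ** T ** S)"
  unfolding block_triangular_def
proof (intro ballI allI impI)
  fix i j assume "i \<in> I" "j \<notin> I"
  then have "S *v axis i 1 \<in> W" using S(2) by (simp add: axis_def)
  moreover have "S *v ((matrix_inv S ** T ** S) *v axis i 1) = T *v (S *v axis i 1)"
    by (simp add: matrix_vector_mul_assoc matrix_mul_assoc matrix_inv_right S(1))
  ultimately have "S *v ((matrix_inv S ** T ** S) *v axis i 1) \<in> W"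
    using T by simp
  then show "(matrix_inv S ** T ** S) $ j $ i = 0"
    using S(2) \<open>j \<notin> I\<close> by (simp add: matrix_vector_mult_axis)
qed

lemma twisted_invariant_subspace:
  fixes xs :: "(('a::field^'n::finite^'n) \<times> ('a^'n^'n)) list"
  assumes inv: "\<forall>(A, B) \<in> set xs. invertible A \<and> invertible B"
    and prod: "comm_prod xs = mat \<zeta>" and root: "primitive_root CARD('n) \<zeta>"
    and "vec.subspace W"
    and invariant: "\<forall>(A, B) \<in> set xs. \<forall>T \<in> {A, B, matrix_inv A, matrix_inv B}. \<forall>v \<in> W. T *v v \<in> W"
  shows "W = {0} \<or> W = UNIV"
proof -
  obtain S :: "'a^'n^'n" and I where S: "invertible S"
    and coords: "\<And>x. S *v x \<in> W \<longleftrightarrow> (\<forall>j. j \<notin> I \<longrightarrow> x $ j = 0)"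
    using subspace_coordinate_form[OF \<open>vec.subspace W\<close>] by blast
  have S': "invertible (matrix_inv S)" "matrix_inv (matrix_inv S) = S"
    using S by (simp_all add: invertible_matrix_inv matrix_inv_matrix_inv)
  define ys where "ys = conj_tuple (matrix_inv S) xs"
  have "\<forall>(A, B) \<in> set ys. invertible A \<and> invertible B \<and>
      (\<forall>T \<in> {A, B, matrix_inv A, matrix_inv B}. block_triangular I T)"
  proof (clarsimp simp: ys_def conj_tuple_def S'(2))
    fix A B assume "(A, B) \<in> set xs"
    with inv invariant have "invertible A" "invertible B"
      and "\<forall>T \<in> {A, B, matrix_inv A, matrix_inv B}. \<forall>v \<in> W. T *v v \<in> W" by auto
    then show "invertible (matrix_inv S ** A ** S) \<and> invertible (matrix_inv S ** B ** S) \<and>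
        block_triangular I (matrix_inv S ** A ** S) \<and> block_triangular I (matrix_inv S ** B ** S) \<and>
        block_triangular I (matrix_inv (matrix_inv S ** A ** S)) \<and>
        block_triangular I (matrix_inv (matrix_inv S ** B ** S))"
      using matrix_inv_conj[OF S'(1)] block_triangular_conj[OF S coords] S S'
      by (simp add: invertible_mult)
  qed
  then have "det (compress I (comm_prod ys)) = 1"
    using det_compress_comm_prod by blast
  moreover have "comm_prod ys = mat \<zeta>"
    unfolding ys_def comm_prod_conj_tuple[OF S'(1) inv] prod by (rule conj_mat[OF S'(1)])
  ultimately have "\<zeta> ^ card I = 1"
    by (simp add: det_compress_mat)
  with root have "\<not> (0 < card I \<and> card I < CARD('n))"
    unfolding primitive_root_def by blast
  then have "I = {} \<or> I = UNIV"
    using card_seteq[of UNIV I] by force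
  moreover have S_onto: "S *v (matrix_inv S *v v) = v" for v
    by (simp add: matrix_vector_mul_assoc matrix_inv_right S)
  ultimately show ?thesis
  proof (elim disjE)
    assume "I = {}"
    then have "w = 0" if "w \<in> W" for w
    proof -
      have "matrix_inv S *v w = 0"
        using coords[of "matrix_inv S *v w"] that \<open>I = {}\<close> S_onto[of w] by (simp add: vec_eq_iff)
      then show "w = 0" using S_onto[of w] by simp
    qed
    then show ?thesis using vec.subspace_0[OF \<open>vec.subspace W\<close>] by blast
  next
    assume "I = UNIV"
    then show ?thesis using coords S_onto by (metis UNIV_I UNIV_eq_I)
  qed
qed

lemma commute_matrix_inv:
  fixes A M :: "'a::field^'n::finite^'n"
  assumes "invertible A" "M ** A = A ** M"
  shows "M ** matrix_inv A = matrix_inv A ** M"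
proof -
  have "M ** matrix_inv A = matrix_inv A ** (A ** M) ** matrix_inv A"
    by (simp add: matrix_mul_assoc matrix_inv_left assms(1))
  also have "\<dots> = matrix_inv A ** M"
    by (simp only: assms(2)[symmetric] matrix_mul_assoc[symmetric] matrix_inv_right[OF assms(1)]
        matrix_mul_rid)
  finally show ?thesis .
qed

lemma twisted_commutant_zero_or_invertible:
  fixes xs :: "(('a::field^'n::finite^'n) \<times> ('a^'n^'n)) list"
  assumes inv: "\<forall>(A, B) \<in> set xs. invertible A \<and> invertible B"
    and "comm_prod xs = mat \<zeta>" "primitive_root CARD('n) \<zeta>"
    and comm: "\<forall>(A, B) \<in> set xs. M ** A = A ** M \<and> M ** B = B ** M"
  shows "M = 0 \<or> invertible M"
proof -
  define W where "W = {v. M *v v = 0}"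
  have "vec.subspace W" unfolding W_def by (rule vec.subspace_kernel)
  moreover have "\<forall>(A, B) \<in> set xs. \<forall>T \<in> {A, B, matrix_inv A, matrix_inv B}. \<forall>v \<in> W. T *v v \<in> W"
  proof (clarify)
    fix A B T v assume "(A, B) \<in> set xs" "T \<in> {A, B, matrix_inv A, matrix_inv B}" "v \<in> W"
    with inv comm have "M ** T = T ** M"
      by (auto intro: commute_matrix_inv)
    then have "M *v (T *v v) = T *v (M *v v)" by (simp add: matrix_vector_mul_assoc)
    then show "T *v v \<in> W" using \<open>v \<in> W\<close> by (simp add: W_def)
  qed
  ultimately have "W = {0} \<or> W = UNIV"
    using twisted_invariant_subspace[OF inv assms(2,3)] by blast
  then show ?thesis
  proof
    assume "W = {0}"
    then have "\<forall>v. M *v v = 0 \<longrightarrow> v = 0" by (auto simp: W_def)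
    then show ?thesis using invertible_left_inverse matrix_left_invertible_ker by blast
  next
    assume "W = UNIV"
    then have "M = 0" by (auto simp: W_def matrix_eq)
    then show ?thesis ..
  qed
qed

section \<open>Eigenvalues over an algebraically closed field\<close>

definition poly_mat :: "'a::comm_ring_1 poly \<Rightarrow> 'a^'n::finite^'n \<Rightarrow> 'a^'n^'n" where
  "poly_mat p M = fold_coeffs (\<lambda>a N. mat a + M ** N) p 0"

lemma poly_mat_0 [simp]: "poly_mat 0 M = 0"
  by (simp add: poly_mat_def)

lemma poly_mat_pCons [simp]: "poly_mat (pCons a p) M = mat a + M ** poly_mat p M"
  by (cases "p = 0 \<and> a = 0") (auto simp: poly_mat_def)

lemma poly_mat_add: "poly_mat (p + q) M = poly_mat p M + poly_mat q M"
proof (induction p arbitrary: q)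
  case (pCons a p)
  then show ?case by (cases q) (simp add: mat_add matrix_add_ldistrib algebra_simps)
qed simp

lemma poly_mat_smult: "poly_mat (Polynomial.smult c p) M = mat c ** poly_mat p M"
  by (induction p) (simp_all add: matrix_add_ldistrib mat_mult_mat mat_mult_left_commute)

lemma poly_mat_mult: "poly_mat (p * q) M = poly_mat p M ** poly_mat q M"
  by (induction p)
    (simp_all add: poly_mat_add poly_mat_smult matrix_add_rdistrib matrix_mul_assoc)

lemma poly_mat_diff: "poly_mat (p - q) M = poly_mat p M - poly_mat q M"
  using poly_mat_add[of "p - q" q M] by (simp add: algebra_simps)

lemma poly_mat_linear: "poly_mat [:-a, 1:] M = M - mat a"
  by (simp add: mat_diff[of 0 a, simplified])

lemma finite_poly_mat_annihilator:
  fixes M :: "'a::{comm_ring_1,finite}^'n::finite^'n"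
  obtains p where "p \<noteq> 0" "poly_mat p M = 0"
proof -
  have "\<not> inj (\<lambda>k. poly_mat (Polynomial.monom 1 k) M)"
    using finite_imageD[of "\<lambda>k. poly_mat (Polynomial.monom 1 k) M" UNIV] by auto
  then obtain k l where "k \<noteq> l" "poly_mat (Polynomial.monom 1 k) M = poly_mat (Polynomial.monom 1 l) M"
    unfolding inj_def by blast
  then show thesis
    using that[of "Polynomial.monom 1 k - Polynomial.monom 1 l"] by (simp add: poly_mat_diff monom_eq_iff')
qed

lemma alg_closed_eigenvalue:
  fixes M :: "'a::alg_closed_field^'n::finite^'n"
  assumes "p \<noteq> 0" "poly_mat p M = 0"
  obtains a where "\<not> invertible (M - mat a)"
proof -
  have "\<exists>a. \<not> invertible (M - mat a)"
  proof (rule ccontr)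
    assume "\<nexists>a. \<not> invertible (M - mat a)"
    then have factors: "invertible (M - mat a)" for a by blast
    have "invertible (poly_mat (\<Prod>a\<in>#A. [:-a, 1:]) M)" for A
    proof (induction A)
      case empty
      then show ?case by (simp add: one_pCons invertible_mat)
    next
      case (add a A)
      then show ?case
        by (simp only: image_mset_add_mset prod_mset.add_mset poly_mat_mult poly_mat_linear)
          (intro invertible_mult factors)
    qed
    moreover obtain A where "p = Polynomial.smult (Polynomial.lead_coeff p) (\<Prod>a\<in>#A. [:-a, 1:])"
      using alg_closed_imp_factorization[OF assms(1)] by blast
    ultimately have "invertible (poly_mat p M)"
      by (metis poly_mat_smult invertible_mult invertible_mat leading_coeff_0_iff assms(1))
    with assms(2) show False by (simp add: not_invertible_zero)
  qed
  with that show thesis by blast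
qed

section \<open>Scalar stabilisers\<close>

definition ac_matrix :: "'a::field^'n::finite^'n \<Rightarrow> 'a alg_closure^'n^'n" where
  "ac_matrix A = (\<chi> i j. to_ac (A $ i $ j))"

lemma ac_matrix_0 [simp]: "ac_matrix 0 = 0"
  by (simp add: ac_matrix_def vec_eq_iff)

lemma ac_matrix_add: "ac_matrix (A + B) = ac_matrix A + ac_matrix B"
  by (simp add: ac_matrix_def vec_eq_iff)

lemma ac_matrix_mult: "ac_matrix (A ** B) = ac_matrix A ** ac_matrix B"
  by (simp add: ac_matrix_def vec_eq_iff matrix_matrix_mult_def to_ac_sum)

lemma ac_matrix_mat: "ac_matrix (mat c) = mat (to_ac c)"
  by (simp add: ac_matrix_def vec_eq_iff mat_def)

lemma ac_matrix_invertible: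
  assumes "invertible A"
  shows "invertible (ac_matrix A)" "matrix_inv (ac_matrix A) = ac_matrix (matrix_inv A)"
proof -
  have "ac_matrix A ** ac_matrix (matrix_inv A) = mat 1"
    by (simp add: ac_matrix_mult[symmetric] matrix_inv_right[OF assms] ac_matrix_mat)
  then show "invertible (ac_matrix A)" "matrix_inv (ac_matrix A) = ac_matrix (matrix_inv A)"
    using invertible_right_inverse matrix_inv_unique by blast+
qed

lemma ac_matrix_comm_prod:
  assumes "\<forall>(A, B) \<in> set xs. invertible A \<and> invertible B"
  shows "comm_prod (map (\<lambda>(A, B). (ac_matrix A, ac_matrix B)) xs) = ac_matrix (comm_prod xs)"
  using assms
  by (induction xs) (auto simp: comm_prod_def ac_matrix_mat commutator_def ac_matrix_mult
      ac_matrix_invertible)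

lemma ac_matrix_poly_mat: "ac_matrix (poly_mat p M) = poly_mat (map_poly to_ac p) (ac_matrix M)"
  by (induction p) (simp_all add: map_poly_pCons ac_matrix_add ac_matrix_mult ac_matrix_mat)

lemma primitive_root_to_ac: "primitive_root n (to_ac z) \<longleftrightarrow> primitive_root n z"
  by (simp add: primitive_root_def flip: to_ac_power to_ac_1)

lemma ac_matrix_eq_matD:
  assumes "ac_matrix P = mat a"
  shows "P = mat (P $ i $ i)"
proof -
  have entries: "to_ac (P $ j $ k) = (if j = k then a else 0)" for j k
    using assms by (auto simp: ac_matrix_def mat_def vec_eq_iff)
  have "P $ j $ k = mat (P $ i $ i) $ j $ k" for j k
    using entries[of j k] entries[of i i] by (cases "j = k", simp_all add: mat_def, metis to_ac_eq_iff)
  then show ?thesis unfolding vec_eq_iff by blast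
qed

lemma twisted_commutant_scalar:
  fixes xs :: "(('a::{field,finite}^'n::finite^'n) \<times> ('a^'n^'n)) list"
  assumes inv: "\<forall>(A, B) \<in> set xs. invertible A \<and> invertible B"
    and prod: "comm_prod xs = mat \<zeta>" and root: "primitive_root CARD('n) \<zeta>"
    and comm: "\<forall>(A, B) \<in> set xs. P ** A = A ** P \<and> P ** B = B ** P"
  shows "\<exists>c. P = mat c"
proof -
  define ys where "ys = map (\<lambda>(A, B). (ac_matrix A, ac_matrix B)) xs"
  obtain p where "p \<noteq> 0" "poly_mat p P = 0" by (rule finite_poly_mat_annihilator)
  then have "map_poly to_ac p \<noteq> 0" "poly_mat (map_poly to_ac p) (ac_matrix P) = 0"
    by (simp_all add: map_poly_eq_0_iff flip: ac_matrix_poly_mat)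
  then obtain a where singular: "\<not> invertible (ac_matrix P - mat a)"
    by (rule alg_closed_eigenvalue)
  have "\<forall>(A, B) \<in> set ys. invertible A \<and> invertible B"
    using inv by (auto simp: ys_def ac_matrix_invertible)
  moreover have "comm_prod ys = mat (to_ac \<zeta>)"
    unfolding ys_def ac_matrix_comm_prod[OF inv] prod by (rule ac_matrix_mat)
  moreover have "primitive_root CARD('n) (to_ac \<zeta>)"
    using root by (simp add: primitive_root_to_ac)
  moreover have "\<forall>(A, B) \<in> set ys. (ac_matrix P - mat a) ** A = A ** (ac_matrix P - mat a)
      \<and> (ac_matrix P - mat a) ** B = B ** (ac_matrix P - mat a)"
  proof (clarsimp simp: ys_def)
    fix A B assume "(A, B) \<in> set xs"
    with comm have "ac_matrix P ** ac_matrix A = ac_matrix A ** ac_matrix P"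
      "ac_matrix P ** ac_matrix B = ac_matrix B ** ac_matrix P"
      by (auto simp flip: ac_matrix_mult)
    then show "(ac_matrix P - mat a) ** ac_matrix A = ac_matrix A ** (ac_matrix P - mat a) \<and>
        (ac_matrix P - mat a) ** ac_matrix B = ac_matrix B ** (ac_matrix P - mat a)"
      by (simp add: matrix_diff_rdistrib matrix_diff_ldistrib mat_mult_commute[of a])
  qed
  ultimately have "ac_matrix P - mat a = 0 \<or> invertible (ac_matrix P - mat a)"
    by (rule twisted_commutant_zero_or_invertible)
  with singular have "ac_matrix P = mat a" by simp
  then show ?thesis by (blast dest: ac_matrix_eq_matD)
qed

section \<open>Counting orbits\<close>

lemma scalar_rel_equiv: "equiv (GL :: ('a::field^'n::finite^'n) set) scalar_rel"
proof (rule equivI)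
  show "refl_on (GL :: ('a^'n^'n) set) scalar_rel"
    by (rule refl_onI) (auto simp: scalar_rel_def intro!: exI[of _ 1])
  show "sym (scalar_rel :: ('a^'n^'n) rel)"
  proof (rule symI)
    fix P Q :: "'a^'n^'n" assume "(P, Q) \<in> scalar_rel"
    then obtain c where "P \<in> GL" "Q \<in> GL" "c \<noteq> 0" "Q = mat c ** P" by (auto simp: scalar_rel_def)
    then show "(Q, P) \<in> scalar_rel"
      unfolding scalar_rel_def by (auto simp: matrix_mul_assoc mat_mult_mat intro!: exI[of _ "inverse c"])
  qed
  show "trans (scalar_rel :: ('a^'n^'n) rel)"
  proof (rule transI)
    fix P Q R :: "'a^'n^'n" assume "(P, Q) \<in> scalar_rel" "(Q, R) \<in> scalar_rel"
    then obtain c d where "P \<in> GL" "R \<in> GL" "c \<noteq> 0" "d \<noteq> 0" "R = mat d ** (mat c ** P)"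
      by (auto simp: scalar_rel_def)
    then show "(P, R) \<in> scalar_rel"
      unfolding scalar_rel_def by (auto simp: matrix_mul_assoc mat_mult_mat intro!: exI[of _ "d * c"])
  qed
qed (auto simp: scalar_rel_def)

lemma conj_rel_equiv:
  fixes U :: "(('a::field^'n::finite^'n) \<times> ('a^'n^'n)) list set"
  shows "equiv U (conj_rel U)"
proof (rule equivI)
  have GL: "P \<in> GL \<longleftrightarrow> invertible P" for P :: "'a^'n^'n" by (simp add: GL_def)
  have one: "conj_tuple (mat 1) xs = xs" for xs :: "(('a^'n^'n) \<times> ('a^'n^'n)) list"
    using conj_tuple_mat[of 1] by simp
  show "refl_on U (conj_rel U)"
    by (rule refl_onI) (auto simp: conj_rel_def GL one invertible_mat intro!: bexI[of _ "mat 1"])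
  show "sym (conj_rel U)"
  proof (rule symI)
    fix s t assume "(s, t) \<in> conj_rel U"
    then obtain P where "s \<in> U" "t \<in> U" "invertible P" "t = conj_tuple P s"
      by (auto simp: conj_rel_def GL)
    then show "(t, s) \<in> conj_rel U"
      unfolding conj_rel_def
      by (auto simp: GL conj_tuple_mult invertible_matrix_inv matrix_inv_left one
          intro!: bexI[of _ "matrix_inv P"])
  qed
  show "trans (conj_rel U)"
    by (rule transI) (auto simp: conj_rel_def GL conj_tuple_mult invertible_mult)
qed (auto simp: conj_rel_def)

lemma conj_tuple_eq_iff_scalar_rel:
  fixes P Q :: "'a::{field,finite}^'n::finite^'n"
  assumes xs: "xs \<in> twisted_tuples g \<zeta>" and root: "primitive_root CARD('n) \<zeta>"
    and "P \<in> GL" "Q \<in> GL"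
  shows "conj_tuple P xs = conj_tuple Q xs \<longleftrightarrow> (P, Q) \<in> scalar_rel"
proof
  have P: "invertible P" and Q: "invertible Q" using assms(3,4) by (simp_all add: GL_def)
  define R where "R = matrix_inv Q ** P"
  have R: "invertible R" unfolding R_def by (intro invertible_mult invertible_matrix_inv Q P)
  assume "conj_tuple P xs = conj_tuple Q xs"
  then have "conj_tuple R xs = conj_tuple (matrix_inv Q) (conj_tuple Q xs)"
    unfolding R_def conj_tuple_mult[OF invertible_matrix_inv[OF Q] P, symmetric] by simp
  also have "\<dots> = xs"
    using conj_tuple_mat[of 1 xs] by (simp add: conj_tuple_mult invertible_matrix_inv matrix_inv_left Q)
  finally have "conj_tuple R xs = xs" .
  then have "\<forall>(A, B) \<in> set xs. R ** A = A ** R \<and> R ** B = B ** R"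
    using conj_tuple_fixed_imp_commute[OF R] by blast
  moreover have "comm_prod xs = mat \<zeta>" using xs by (simp add: twisted_tuples_def)
  ultimately obtain c where c: "R = mat c"
    using twisted_commutant_scalar[OF twisted_tuples_invertible[OF xs] _ root] by blast
  with R have "c \<noteq> 0" using not_invertible_zero by auto
  have "P = Q ** R" unfolding R_def by (simp add: matrix_inv_cancel_right Q)
  then have "Q = mat (inverse c) ** P"
    using \<open>c \<noteq> 0\<close> by (simp add: c mat_mult_commute[of c Q, symmetric] matrix_mul_assoc mat_mult_mat)
  then show "(P, Q) \<in> scalar_rel"
    using assms(3,4) \<open>c \<noteq> 0\<close> unfolding scalar_rel_def by (auto intro!: exI[of _ "inverse c"])
next
  assume "(P, Q) \<in> scalar_rel"
  then obtain c where "c \<noteq> 0" "Q = mat c ** P" "invertible P" by (auto simp: scalar_rel_def GL_def)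
  then show "conj_tuple P xs = conj_tuple Q xs"
    using conj_tuple_mult[of "mat c" P xs] by (simp add: invertible_mat conj_tuple_mat)
qed

lemma card_image_eq_if_same_fibres:
  assumes "\<forall>x \<in> A. \<forall>y \<in> A. f x = f y \<longleftrightarrow> g x = g y"
  shows "card (f ` A) = card (g ` A)"
proof (rule bij_betw_same_card)
  define h where "h z = g (inv_into A f z)" for z
  have h: "h (f x) = g x" if "x \<in> A" for x
    using assms that inv_into_into[of "f x" f A] f_inv_into_f[of "f x" f A] unfolding h_def by auto
  show "bij_betw h (f ` A) (g ` A)"
    unfolding bij_betw_def inj_on_def using assms h by (auto simp: image_iff)
qed

lemma card_conj_orbit:
  fixes xs :: "(('a::{field,finite}^'n::finite^'n) \<times> ('a^'n^'n)) list"
  assumes "xs \<in> twisted_tuples g \<zeta>" "primitive_root CARD('n) \<zeta>"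
  shows "card (conj_rel (twisted_tuples g \<zeta>) `` {xs}) = card (PGL :: ('a^'n^'n) set set)"
proof -
  have "conj_rel (twisted_tuples g \<zeta>) `` {xs} = (\<lambda>P. conj_tuple P xs) ` GL"
    using assms(1) by (auto simp: conj_rel_def GL_def conj_tuple_twisted_tuples)
  moreover have "PGL = (\<lambda>P. scalar_rel `` {P}) ` (GL :: ('a^'n^'n) set)"
    by (auto simp: PGL_def quotient_def)
  moreover have "card ((\<lambda>P. conj_tuple P xs) ` GL) = card ((\<lambda>P. scalar_rel `` {P}) ` (GL :: ('a^'n^'n) set))"
    using conj_tuple_eq_iff_scalar_rel[OF assms] eq_equiv_class_iff[OF scalar_rel_equiv]
    by (intro card_image_eq_if_same_fibres) blast
  ultimately show ?thesis by simp
qed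

theorem corollary3p3:
  fixes \<zeta> :: "'a::{field, finite}" and g :: nat
  assumes "CARD('n::finite) dvd CARD('a) - 1"
    and "primitive_root CARD('n) \<zeta>"
    and "g \<ge> 1"
  shows "real (card (twisted_tuples g \<zeta> // conj_rel (twisted_tuples g \<zeta> :: (('a, 'n) sqmat \<times> ('a, 'n) sqmat) list set)))
         = real (card (twisted_tuples g \<zeta> :: (('a, 'n) sqmat \<times> ('a, 'n) sqmat) list set))
           / real (card (PGL :: ('a, 'n) sqmat set set))"
proof -
  let ?X = "twisted_tuples g \<zeta> :: (('a, 'n) sqmat \<times> ('a, 'n) sqmat) list set"
  let ?k = "card (PGL :: ('a, 'n) sqmat set set)"
  have equiv: "equiv ?X (conj_rel ?X)" by (rule conj_rel_equiv)
  have "finite ?X"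
    by (rule finite_subset[OF _ finite_lists_length_eq[of UNIV g]]) (auto simp: twisted_tuples_def)
  moreover have "\<forall>C \<in> ?X // conj_rel ?X. card C = ?k"
    using card_conj_orbit[OF _ assms(2)] by (auto elim: quotientE)
  ultimately have "?k * card (?X // conj_rel ?X) = card (\<Union> (?X // conj_rel ?X))"
    using quotient_disj[OF equiv] finite_quotient[OF _ equiv_type[OF equiv]]
    by (intro card_partition) (auto simp: Union_quotient[OF equiv])
  then have "?k * card (?X // conj_rel ?X) = card ?X"
    by (simp add: Union_quotient[OF equiv])
  moreover have "?k \<noteq> 0"
    using quotientI[of "mat 1" GL scalar_rel] invertible_mat[of 1] finite_quotient[of GL scalar_rel]
    by (auto simp: PGL_def GL_def scalar_rel_def)
  ultimately show ?thesis
    by (simp add: field_simps flip: of_nat_mult)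
qed

end
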